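(* Consider a hierarchical tensor factorization with mode tree $\mathcal T$ over $[N]$, numbers $(R_\nu)_{\nu\in\mathrm{int}(\mathcal T)}$, and weight matrices $(W^{(\nu)}(t))_{\nu\in\mathcal T}$ evolving under gradient flow on $\phi_H$ for $t\ge 0$. Assume the unbalancedness magnitude at initialization ($t=0$) is zero. Then for every $\nu\in\mathrm{int}(\mathcal T)$, $r\in[R_\nu]$ and $t\ge 0$: $$\frac{d}{dt}\sigma_{\nu,r}(t)=\sigma_{\nu,r}(t)^{2-\frac{2}{L_\nu}}\,L_\nu\,\big\langle -\nabla\mathcal L_H(\mathcal W_H(t)),\,\mathcal E_{\nu,r}(t)\big\rangle,$$ where $L_\nu:=|C(\nu)|+1$ is the number of weight vectors in a local component at $\nu$.
   Context: Fix $N\in\mathbb N$, $D_1,\dots,D_N\in\mathbb N$; $[K]:=\{1,\dots,K\}$. Norms are Frobenius norms, $\langle\cdot,\cdot\rangle$ the entrywise inner product, $\otimes$ the tensor (outer) product. A mode tree $\mathcal T$ over $[N]$ is a rooted tree whose nodes are labeled by subsets of $[N]$, with exactly $N$ leaves labeled $\{1\},\dots,\{N\}$, and where each interior node's label is the union of its children's labels; nodes are identified with labels, the root is $[N]$, $\mathrm{int}(\mathcal T)$ denotes interior nodes, $Pa(\nu)$ the parent, $C(\nu)$ the children (in a fixed order). A hierarchical tensor factorization is given by $R_\nu\in\mathbb N$ ($\nu\in\mathrm{int}(\mathcal T)$), with conventions $R_{Pa([N])}:=1$, $R_{\{n\}}:=D_n$, and weight matrices $W^{(\nu)}\in\mathbb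 R^{R_\nu\times R_{Pa(\nu)}}$, $\nu\in\mathcal T$. Intermediate tensors: for leaves, $\mathcal W^{(\{n\},r)}:=W^{(\{n\})}_{:,r}$, $r\in[R_{Pa(\{n\})}]$; for $\nu\in\mathrm{int}(\mathcal T)\setminus\{[N]\}$ (from leaves to root) and $r\in[R_{Pa(\nu)}]$, $\mathcal W^{(\nu,r)}:=\pi_\nu\big(\sum_{r'=1}^{R_\nu}W^{(\nu)}_{r',r}\bigotimes_{\nu_c\in C(\nu)}\mathcal W^{(\nu_c,r')}\big)$; the end tensor is $\mathcal W_H:=\pi_{[N]}\big(\sum_{r'=1}^{R_{[N]}}W^{([N])}_{r',1}\bigotimes_{\nu_c\in C([N])}\mathcal W^{(\nu_c,r')}\big)\in\mathbb R^{D_1\times\cdots\times D_N}$. Here $\pi_\nu$ permutes the modes of its input (whose modes correspond, in order, to the elements of the first child in ascending order, then of the second child, etc.) so that they appear in ascending order of the elements of $\nu$. For $\nu\in\mathrm{int}(\mathcal T)$, $r\in[R_\nu]$, $\mathrm{LC}(\nu,r)$ is the collection of vectors $W^{(\nu)}_{r,:}$ and $W^{(\nu_c)}_{:,r}$ ($\nu_c\in C(\nu)$); the $(\nu,r)$'th local component is $W^{(\nu)}_{r,:}\otimes\bigotimes_{\nu_c\in C(\nu)}W^{(\nu_c)}_{:,r}$ and its norm is $\sigma_{\nu,r}:=\prod_{w\in\mathrm{LC}(\nu,r)}\|w\|$. $\mathcal E_{\nu,r}$ denotes the end tensor obtained from the same construction except that, for every $r'\in[R_{Pa(\nu)}]$,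 the tensor produced at node $\nu$ (the end tensor itself if $\nu=[N]$, with $r'=1$) is replaced by $\pi_\nu\big(\sigma_{\nu,r}^{-1}W^{(\nu)}_{r,r'}\bigotimes_{\nu_c\in C(\nu)}\mathcal W^{(\nu_c,r)}\big)$; by convention $\mathcal E_{\nu,r}:=0$ if $\sigma_{\nu,r}=0$. Let $\mathcal L_H:\mathbb R^{D_1\times\cdots\times D_N}\to\mathbb R_{\ge0}$ be differentiable and locally smooth (its gradient is Lipschitz on every compact set), $\phi_H((W^{(\nu)})_{\nu\in\mathcal T}):=\mathcal L_H(\mathcal W_H)$, and gradient flow means $\frac{d}{dt}W^{(\nu)}(t)=-\frac{\partial}{\partial W^{(\nu)}}\phi_H((W^{(\nu')}(t))_{\nu'\in\mathcal T})$ for all $\nu\in\mathcal T$, $t\ge0$; $\mathcal W_H(t),\sigma_{\nu,r}(t),\mathcal E_{\nu,r}(t)$ are computed from the weights at time $t$. The unbalancedness magnitude is $\max_{\nu\in\mathrm{int}(\mathcal T),r\in[R_\nu],w,w'\in\mathrm{LC}(\nu,r)}\big|\|w\|^2-\|w'\|^2\big|$. *)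

theory Defs
  imports "HOL-Analysis.Analysis"
begin

(* ---------------------------------------------------------------------------
   Conventions:
   * Nodes of a mode tree are identified with their labels (subsets of [N]).
   * All matrix/vector/tensor indices are 0-based: r \<in> [R] becomes r < R.
   * A tensor in R^{D_1 x ... x D_N} is a function on index assignments
     idx :: nat \<Rightarrow> nat (idx n = index along mode n), supported on
     tensor_index_set N D.  Tensors "over a node \<nu>" are functions of idx that
     only depend on idx restricted to \<nu>; the outer product over children is
     then the pointwise product, and the mode permutation \<pi>_\<nu> is the identity
     in this representation.
   --------------------------------------------------------------------------- *)

type_synonym tensor = "(nat \<Rightarrow> nat) \<Rightarrow> real"
type_synonym weights = "nat set \<Rightarrow> nat \<Rightarrow> nat \<Rightarrow> real"

definition mode_tree :: "nat \<Rightarrow> nat set set \<Rightarrow> bool" where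
  "mode_tree N T \<longleftrightarrow>
     {1..N} \<in> T \<and>
     (\<forall>n\<in>{1..N}. {n} \<in> T) \<and>
     (\<forall>\<nu>\<in>T. \<nu> \<noteq> {} \<and> \<nu> \<subseteq> {1..N}) \<and>
     (\<forall>a\<in>T. \<forall>b\<in>T. a \<subseteq> b \<or> b \<subseteq> a \<or> a \<inter> b = {})"

definition children :: "nat set set \<Rightarrow> nat set \<Rightarrow> nat set set" where
  "children T \<nu> = {\<mu> \<in> T. \<mu> \<subset> \<nu> \<and> \<not> (\<exists>\<kappa>\<in>T. \<mu> \<subset> \<kappa> \<and> \<kappa> \<subset> \<nu>)}"

definition parent :: "nat set set \<Rightarrow> nat set \<Rightarrow> nat set" where
  "parent T \<nu> = (THE \<kappa>. \<kappa> \<in> T \<and> \<nu> \<in> children T \<kappa>)"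

definition int_nodes :: "nat set set \<Rightarrow> nat set set" where
  "int_nodes T = {\<nu> \<in> T. children T \<nu> \<noteq> {}}"

definition rk :: "nat set set \<Rightarrow> (nat \<Rightarrow> nat) \<Rightarrow> (nat set \<Rightarrow> nat) \<Rightarrow> nat set \<Rightarrow> nat" where
  "rk T D R \<nu> = (if children T \<nu> = {} then D (the_elem \<nu>) else R \<nu>)"

definition rk_pa :: "nat \<Rightarrow> nat set set \<Rightarrow> (nat \<Rightarrow> nat) \<Rightarrow> (nat set \<Rightarrow> nat) \<Rightarrow> nat set \<Rightarrow> nat" where
  "rk_pa N T D R \<nu> = (if \<nu> = {1..N} then 1 else rk T D R (parent T \<nu>))"

definition tensor_index_set :: "nat \<Rightarrow> (nat \<Rightarrow> nat) \<Rightarrow> (nat \<Rightarrow> nat) set" where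
  "tensor_index_set N D =
     {idx. (\<forall>n\<in>{1..N}. idx n < D n) \<and> (\<forall>n. n \<notin> {1..N} \<longrightarrow> idx n = 0)}"

definition tensor_space :: "nat \<Rightarrow> (nat \<Rightarrow> nat) \<Rightarrow> tensor set" where
  "tensor_space N D = {X. \<forall>idx. idx \<notin> tensor_index_set N D \<longrightarrow> X idx = 0}"

definition restrict_tensor :: "nat \<Rightarrow> (nat \<Rightarrow> nat) \<Rightarrow> tensor \<Rightarrow> tensor" where
  "restrict_tensor N D X = (\<lambda>idx. if idx \<in> tensor_index_set N D then X idx else 0)"

definition tinner :: "nat \<Rightarrow> (nat \<Rightarrow> nat) \<Rightarrow> tensor \<Rightarrow> tensor \<Rightarrow> real" where
  "tinner N D X Y = (\<Sum>idx\<in>tensor_index_set N D. X idx * Y idx)"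

definition tnorm :: "nat \<Rightarrow> (nat \<Rightarrow> nat) \<Rightarrow> tensor \<Rightarrow> real" where
  "tnorm N D X = sqrt (tinner N D X X)"

definition is_gradient :: "nat \<Rightarrow> (nat \<Rightarrow> nat) \<Rightarrow> (tensor \<Rightarrow> real) \<Rightarrow> (tensor \<Rightarrow> tensor) \<Rightarrow> bool" where
  "is_gradient N D L G \<longleftrightarrow>
     (\<forall>X\<in>tensor_space N D. G X \<in> tensor_space N D \<and>
        (\<forall>\<epsilon>>0. \<exists>\<delta>>0. \<forall>H\<in>tensor_space N D. tnorm N D H < \<delta> \<longrightarrow>
            \<bar>L (\<lambda>idx. X idx + H idx) - L X - tinner N D (G X) H\<bar> \<le> \<epsilon> * tnorm N D H))"

(* gradient Lipschitz on every compact (equivalently: every bounded) subset *)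
definition locally_smooth :: "nat \<Rightarrow> (nat \<Rightarrow> nat) \<Rightarrow> (tensor \<Rightarrow> tensor) \<Rightarrow> bool" where
  "locally_smooth N D G \<longleftrightarrow>
     (\<forall>B. \<exists>K. \<forall>X\<in>tensor_space N D. \<forall>Y\<in>tensor_space N D.
        tnorm N D X \<le> B \<longrightarrow> tnorm N D Y \<le> B \<longrightarrow>
        tnorm N D (\<lambda>idx. G X idx - G Y idx) \<le> K * tnorm N D (\<lambda>idx. X idx - Y idx))"

(* ten k T R W rep \<nu> r = intermediate tensor W^(\<nu>,r) (fuel k), where
   rep \<mu> r' = Some X replaces the tensor produced at node \<mu> for column r' by X. *)
primrec ten :: "nat \<Rightarrow> nat set set \<Rightarrow> (nat set \<Rightarrow> nat) \<Rightarrow> weights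
    \<Rightarrow> (nat set \<Rightarrow> nat \<Rightarrow> tensor option) \<Rightarrow> nat set \<Rightarrow> nat \<Rightarrow> tensor" where
  "ten 0 T R W rep \<nu> r = (case rep \<nu> r of Some X \<Rightarrow> X | None \<Rightarrow> (\<lambda>_. 0))"
| "ten (Suc k) T R W rep \<nu> r =
     (case rep \<nu> r of Some X \<Rightarrow> X | None \<Rightarrow>
       (if children T \<nu> = {} then (\<lambda>idx. W \<nu> (idx (the_elem \<nu>)) r)
        else (\<lambda>idx. \<Sum>r'<R \<nu>. W \<nu> r' r * (\<Prod>c\<in>children T \<nu>. ten k T R W rep c r' idx))))"

definition end_tensor :: "nat \<Rightarrow> (nat \<Rightarrow> nat) \<Rightarrow> nat set set \<Rightarrow> (nat set \<Rightarrow> nat) \<Rightarrow> weights \<Rightarrow> tensor" where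
  "end_tensor N D T R W = restrict_tensor N D (ten N T R W (\<lambda>_ _. None) {1..N} 0)"

definition row_norm :: "nat \<Rightarrow> (nat \<Rightarrow> nat) \<Rightarrow> nat set set \<Rightarrow> (nat set \<Rightarrow> nat) \<Rightarrow> weights \<Rightarrow> nat set \<Rightarrow> nat \<Rightarrow> real" where
  "row_norm N D T R W \<nu> r = sqrt (\<Sum>j<rk_pa N T D R \<nu>. (W \<nu> r j)\<^sup>2)"

definition col_norm :: "(nat \<Rightarrow> nat) \<Rightarrow> nat set set \<Rightarrow> (nat set \<Rightarrow> nat) \<Rightarrow> weights \<Rightarrow> nat set \<Rightarrow> nat \<Rightarrow> real" where
  "col_norm D T R W \<nu> r = sqrt (\<Sum>i<rk T D R \<nu>. (W \<nu> i r)\<^sup>2)"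

definition lc_norm :: "nat \<Rightarrow> (nat \<Rightarrow> nat) \<Rightarrow> nat set set \<Rightarrow> (nat set \<Rightarrow> nat) \<Rightarrow> weights \<Rightarrow> nat set \<Rightarrow> nat \<Rightarrow> real" where
  "lc_norm N D T R W \<nu> r = row_norm N D T R W \<nu> r * (\<Prod>c\<in>children T \<nu>. col_norm D T R W c r)"

definition lc_end_tensor :: "nat \<Rightarrow> (nat \<Rightarrow> nat) \<Rightarrow> nat set set \<Rightarrow> (nat set \<Rightarrow> nat) \<Rightarrow> weights \<Rightarrow> nat set \<Rightarrow> nat \<Rightarrow> tensor" where
  "lc_end_tensor N D T R W \<nu> r =
     (if lc_norm N D T R W \<nu> r = 0 then (\<lambda>_. 0)
      else restrict_tensor N D
        (ten N T R W
          (\<lambda>\<mu> r'. if \<mu> = \<nu> then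
              Some (\<lambda>idx. W \<nu> r r' / lc_norm N D T R W \<nu> r *
                       (\<Prod>c\<in>children T \<nu>. ten N T R W (\<lambda>_ _. None) c r idx))
            else None)
          {1..N} 0))"

definition lc_sqnorms :: "nat \<Rightarrow> (nat \<Rightarrow> nat) \<Rightarrow> nat set set \<Rightarrow> (nat set \<Rightarrow> nat) \<Rightarrow> weights \<Rightarrow> nat set \<Rightarrow> nat \<Rightarrow> real set" where
  "lc_sqnorms N D T R W \<nu> r =
     insert ((row_norm N D T R W \<nu> r)\<^sup>2) ((\<lambda>c. (col_norm D T R W c r)\<^sup>2) ` children T \<nu>)"

(* unbalancedness magnitude (max over an empty index set taken as 0) *)
definition unbalancedness :: "nat \<Rightarrow> (nat \<Rightarrow> nat) \<Rightarrow> nat set set \<Rightarrow> (nat set \<Rightarrow> nat) \<Rightarrow> weights \<Rightarrow> real" where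
  "unbalancedness N D T R W =
     Max (insert 0 {\<bar>a - b\<bar> | a b \<nu> r. \<nu> \<in> int_nodes T \<and> r < R \<nu> \<and>
                      a \<in> lc_sqnorms N D T R W \<nu> r \<and> b \<in> lc_sqnorms N D T R W \<nu> r})"

definition phi_H :: "nat \<Rightarrow> (nat \<Rightarrow> nat) \<Rightarrow> nat set set \<Rightarrow> (nat set \<Rightarrow> nat) \<Rightarrow> (tensor \<Rightarrow> real) \<Rightarrow> weights \<Rightarrow> real" where
  "phi_H N D T R L W = L (end_tensor N D T R W)"

definition wupd :: "weights \<Rightarrow> nat set \<Rightarrow> nat \<Rightarrow> nat \<Rightarrow> real \<Rightarrow> weights" where
  "wupd W \<nu> i j x = W(\<nu> := (W \<nu>)(i := (W \<nu> i)(j := x)))"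

definition partial_phi :: "nat \<Rightarrow> (nat \<Rightarrow> nat) \<Rightarrow> nat set set \<Rightarrow> (nat set \<Rightarrow> nat) \<Rightarrow> (tensor \<Rightarrow> real) \<Rightarrow> weights \<Rightarrow> nat set \<Rightarrow> nat \<Rightarrow> nat \<Rightarrow> real" where
  "partial_phi N D T R L W \<nu> i j = deriv (\<lambda>x. phi_H N D T R L (wupd W \<nu> i j x)) (W \<nu> i j)"

definition gradient_flow :: "nat \<Rightarrow> (nat \<Rightarrow> nat) \<Rightarrow> nat set set \<Rightarrow> (nat set \<Rightarrow> nat) \<Rightarrow> (tensor \<Rightarrow> real) \<Rightarrow> (real \<Rightarrow> weights) \<Rightarrow> bool" where
  "gradient_flow N D T R L W \<longleftrightarrow>
     (\<forall>\<nu>\<in>T. \<forall>i<rk T D R \<nu>. \<forall>j<rk_pa N T D R \<nu>. \<forall>t\<ge>0.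
        ((\<lambda>s. W s \<nu> i j) has_real_derivative (- partial_phi N D T R L (W t) \<nu> i j)) (at t within {0..}))"

end

theory Submission
  imports Defs
begin

text \<open>
  Every weight entry moves with speed \<open>-\<partial>\<phi>\<^sub>H\<close>, and the end tensor is linear in each weight
  matrix. Hence the squared norm of any block of entries of \<open>W\<^sup>(\<^sup>\<mu>\<^sup>)\<close> has derivative twice
  \<open>\<langle>-\<nabla>\<L>\<^sub>H(\<W>\<^sub>H), X\<rangle>\<close>, where \<open>X\<close> is the end tensor with \<open>W\<^sup>(\<^sup>\<mu>\<^sup>)\<close> masked to that block.
  Masking \<open>W\<^sup>(\<^sup>\<nu>\<^sup>)\<close> to its row \<open>r\<close>, or \<open>W\<^sup>(\<^sup>c\<^sup>)\<close> for a child \<open>c\<close> of \<open>\<nu>\<close> to its column \<open>r\<close>, keeps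
  in both cases exactly the \<open>r\<close>-th summand at \<open>\<nu>\<close>, so all vectors of \<open>LC(\<nu>, r)\<close> have squared
  norms with the same derivative. Being balanced at \<open>t = 0\<close>, they all stay equal to the squared
  row norm \<open>\<rho>\<^sup>2\<close>, so \<open>\<sigma>\<^sub>\<nu>\<^sub>,\<^sub>r = \<rho>\<^bsup>L\<^sub>\<nu>\<^esup>\<close>; the chain rule and \<open>\<E>\<^sub>\<nu>\<^sub>,\<^sub>r = X / \<sigma>\<^sub>\<nu>\<^sub>,\<^sub>r\<close> for the row mask
  \<open>X\<close> give the claimed rate. The positivity hypotheses on \<open>D\<close> and \<open>R\<close> and the nonnegativity and local
  smoothness of \<open>\<L>\<^sub>H\<close> only make the flow well-posed; the identity holds along any solution.
\<close>

definition replace_at :: "nat set \<Rightarrow> (nat \<Rightarrow> tensor) \<Rightarrow> nat set \<Rightarrow> nat \<Rightarrow> tensor option" where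
  "replace_at \<mu> X = (\<lambda>\<kappa> r. if \<kappa> = \<mu> then Some (X r) else None)"

definition single_row :: "nat \<Rightarrow> (nat \<Rightarrow> real) \<Rightarrow> nat \<Rightarrow> nat \<Rightarrow> real" where
  "single_row r w = (\<lambda>i j. if i = r then w j else 0)"

definition single_col :: "nat \<Rightarrow> (nat \<Rightarrow> real) \<Rightarrow> nat \<Rightarrow> nat \<Rightarrow> real" where
  "single_col r w = (\<lambda>i j. if j = r then w i else 0)"

definition matrix_unit :: "nat \<Rightarrow> nat \<Rightarrow> nat \<Rightarrow> nat \<Rightarrow> real" where
  "matrix_unit i j = (\<lambda>a b. if a = i \<and> b = j then 1 else 0)"

section \<open>Inner products and real-variable calculus\<close>

lemma tinner_scale_right: "tinner N D X (\<lambda>idx. c * P idx) = c * tinner N D X P"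
  unfolding tinner_def by (simp add: sum_distrib_left algebra_simps)

lemma tinner_divide_right: "tinner N D X (\<lambda>idx. P idx / c) = tinner N D X P / c"
  unfolding tinner_def by (simp add: sum_divide_distrib)

lemma tinner_sum_right:
  "tinner N D X (\<lambda>idx. \<Sum>j\<in>J. c j * P j idx) = (\<Sum>j\<in>J. c j * tinner N D X (P j))"
  unfolding tinner_def by (simp add: sum_distrib_left sum.swap[of _ J] algebra_simps)

lemma tinner_uminus_left: "tinner N D (\<lambda>idx. - X idx) P = - tinner N D X P"
  unfolding tinner_def by (simp add: sum_negf)

lemma tnorm_scale: "tnorm N D (\<lambda>idx. c * P idx) = \<bar>c\<bar> * tnorm N D P"
proof -
  have "tinner N D (\<lambda>idx. c * P idx) (\<lambda>idx. c * P idx) = c\<^sup>2 * tinner N D P P"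
    unfolding tinner_def by (simp add: sum_distrib_left power2_eq_square algebra_simps)
  then show ?thesis unfolding tnorm_def by (simp add: real_sqrt_mult)
qed

lemma tnorm_nonneg: "tnorm N D X \<ge> 0"
  unfolding tnorm_def tinner_def by (simp add: sum_nonneg)

lemma is_gradient_has_real_derivative_along_line:
  assumes grad: "is_gradient N D L G" and X: "X \<in> tensor_space N D" and P: "P \<in> tensor_space N D"
  shows "((\<lambda>x. L (\<lambda>idx. X idx + (x - x0) * P idx)) has_real_derivative tinner N D (G X) P) (at x0)"
  unfolding has_field_derivative_iff
proof (rule LIM_I)
  let ?f = "\<lambda>x. L (\<lambda>idx. X idx + (x - x0) * P idx)"
  fix e :: real assume "0 < e"
  define K where "K = tnorm N D P + 1"
  have K: "K > 0" "tnorm N D P \<le> K" unfolding K_def using tnorm_nonneg[of N D P] by auto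
  define \<epsilon> where "\<epsilon> = e / (2 * K)"
  have "\<epsilon> > 0" using \<open>0 < e\<close> K unfolding \<epsilon>_def by simp
  then obtain \<delta> where "\<delta> > 0" and \<delta>: "\<And>H. H \<in> tensor_space N D \<Longrightarrow> tnorm N D H < \<delta> \<Longrightarrow>
      \<bar>L (\<lambda>idx. X idx + H idx) - L X - tinner N D (G X) H\<bar> \<le> \<epsilon> * tnorm N D H"
    using grad X unfolding is_gradient_def by meson
  show "\<exists>s>0. \<forall>x. x \<noteq> x0 \<and> norm (x - x0) < s \<longrightarrow>
      norm ((?f x - ?f x0) / (x - x0) - tinner N D (G X) P) < e"
  proof (intro exI[of _ "\<delta> / K"] conjI allI impI)
    show "\<delta> / K > 0" using \<open>\<delta> > 0\<close> K by simp
    fix x assume x: "x \<noteq> x0 \<and> norm (x - x0) < \<delta> / K"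
    let ?H = "\<lambda>idx. (x - x0) * P idx"
    have "tnorm N D ?H \<le> \<bar>x - x0\<bar> * K"
      unfolding tnorm_scale using K by (simp add: mult_left_mono)
    also have "\<dots> < \<delta>" using x K by (simp add: pos_less_divide_eq)
    finally have "\<bar>?f x - ?f x0 - (x - x0) * tinner N D (G X) P\<bar> \<le> \<epsilon> * (\<bar>x - x0\<bar> * tnorm N D P)"
      using \<delta>[of ?H] P unfolding tnorm_scale tinner_scale_right tensor_space_def by simp
    then have "\<bar>(?f x - ?f x0) / (x - x0) - tinner N D (G X) P\<bar> \<le> \<epsilon> * tnorm N D P"
      using x by (simp add: divide_le_eq field_simps abs_divide)
    also have "\<dots> \<le> \<epsilon> * K" using \<open>\<epsilon> > 0\<close> K by simp
    also have "\<dots> < e" using \<open>0 < e\<close> K unfolding \<epsilon>_def by simp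
    finally show "norm ((?f x - ?f x0) / (x - x0) - tinner N D (G X) P) < e" by simp
  qed
qed

lemma power_powr_two_minus:
  fixes y :: real
  assumes "y \<ge> 0" "n \<ge> 2"
  shows "(y ^ n) powr (2 - 2 / real n) = y ^ (2 * n - 2)"
proof (cases "y = 0")
  case True
  then show ?thesis using assms(2) by (simp add: power_0_left)
next
  case False
  then have "y > 0" using assms(1) by simp
  then have "(y ^ n) powr (2 - 2 / real n) = y powr (real n * (2 - 2 / real n))"
    by (simp add: powr_realpow[symmetric] powr_powr)
  also have "real n * (2 - 2 / real n) = real (2 * n - 2)"
    using assms(2) by (simp add: field_simps of_nat_diff)
  finally show ?thesis using \<open>y > 0\<close> by (simp add: powr_realpow)
qed

lemma power_rate_eq_powr:
  fixes y h :: real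
  assumes "y \<ge> 0" "n \<ge> 3"
  shows "real n * y ^ (n - 2) * h = (y ^ n) powr (2 - 2 / real n) * real n * (h / y ^ n)"
proof (cases "y = 0")
  case True
  then show ?thesis using assms(2) by (simp add: power_0_left)
next
  case False
  have "(y ^ n) powr (2 - 2 / real n) = y ^ n * y ^ (n - 2)"
    using power_powr_two_minus[OF assms(1), of n] assms(2)
    by (simp add: power_add[symmetric] mult_2)
  with False show ?thesis by (simp add: field_simps)
qed

text \<open>Only the square of \<open>\<rho>\<close> is known to be differentiable; at a zero of \<open>\<rho>\<close> the exponent
  \<open>n \<ge> 2\<close> is what keeps \<open>\<rho>\<^sup>n\<close> differentiable.\<close>

lemma has_real_derivative_power_via_square:
  fixes \<rho> :: "real \<Rightarrow> real"
  assumes nonneg: "\<And>s. \<rho> s \<ge> 0" and sq: "((\<lambda>s. (\<rho> s)\<^sup>2) has_real_derivative d) (at t within S)"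
    and "n \<ge> 2"
  shows "((\<lambda>s. \<rho> s ^ n) has_real_derivative real n / 2 * \<rho> t ^ (n - 2) * d) (at t within S)"
proof (cases "\<rho> t = 0")
  case False
  then have pos: "\<rho> t > 0" using nonneg[of t] by simp
  have "\<rho> = (\<lambda>s. sqrt ((\<rho> s)\<^sup>2))" using nonneg by (simp add: fun_eq_iff)
  then have "(\<rho> has_real_derivative inverse (\<rho> t) / 2 * d) (at t within S)"
    using DERIV_chain2[OF DERIV_real_sqrt sq] pos nonneg[of t] by (metis power2_eq_square real_sqrt_abs
        abs_of_nonneg zero_less_power2 less_irrefl)
  then have "((\<lambda>s. \<rho> s ^ n) has_real_derivative
      real n * (inverse (\<rho> t) / 2 * d * \<rho> t ^ (n - Suc 0))) (at t within S)"
    by (rule DERIV_power)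
  moreover have "n - Suc 0 = Suc (n - 2)" using assms(3) by arith
  ultimately show ?thesis using pos by (simp add: field_simps)
next
  case True
  have "\<rho> s ^ n = (\<rho> s)\<^sup>2 * \<rho> s ^ (n - 2)" for s
    using assms(3) by (metis power_add le_add_diff_inverse)
  then have quotient: "(\<rho> s ^ n - \<rho> t ^ n) / (s - t) = ((\<rho> s)\<^sup>2 - (\<rho> t)\<^sup>2) / (s - t) * \<rho> s ^ (n - 2)" for s
    using True assms(3) by simp
  have "((\<lambda>s. sqrt ((\<rho> s)\<^sup>2)) \<longlongrightarrow> sqrt ((\<rho> t)\<^sup>2)) (at t within S)"
    using DERIV_continuous[OF sq] unfolding continuous_within by (rule tendsto_real_sqrt)
  then have "(\<rho> \<longlongrightarrow> \<rho> t) (at t within S)" using nonneg by simp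
  then have "((\<lambda>s. ((\<rho> s)\<^sup>2 - (\<rho> t)\<^sup>2) / (s - t) * \<rho> s ^ (n - 2)) \<longlongrightarrow> d * \<rho> t ^ (n - 2))
      (at t within S)"
    using sq unfolding has_field_derivative_iff by (intro tendsto_mult tendsto_power)
  moreover have "d * \<rho> t ^ (n - 2) = real n / 2 * \<rho> t ^ (n - 2) * d"
    using True assms(3) by (cases "n = 2") auto
  ultimately show ?thesis
    unfolding has_field_derivative_iff quotient by simp
qed

section \<open>Mode trees\<close>

locale mode_tree_family =
  fixes N :: nat and T :: "nat set set"
  assumes mode_tree: "mode_tree N T"
begin

lemma root_in_tree: "{1..N} \<in> T"
  using mode_tree unfolding mode_tree_def by blast

lemma leaf_in_tree: "n \<in> {1..N} \<Longrightarrow> {n} \<in> T"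
  using mode_tree unfolding mode_tree_def by blast

lemma node_nonempty: "\<nu> \<in> T \<Longrightarrow> \<nu> \<noteq> {}"
  using mode_tree unfolding mode_tree_def by blast

lemma node_subset_modes: "\<nu> \<in> T \<Longrightarrow> \<nu> \<subseteq> {1..N}"
  using mode_tree unfolding mode_tree_def by blast

lemma laminar: "a \<in> T \<Longrightarrow> b \<in> T \<Longrightarrow> a \<subseteq> b \<or> b \<subseteq> a \<or> a \<inter> b = {}"
  using mode_tree unfolding mode_tree_def by blast

lemma finite_tree: "finite T"
  by (rule finite_subset[of _ "Pow {1..N}"]) (use node_subset_modes in auto)

lemma finite_node: "\<nu> \<in> T \<Longrightarrow> finite \<nu>"
  using node_subset_modes finite_subset by blast

lemma card_node_pos: "\<nu> \<in> T \<Longrightarrow> card \<nu> > 0"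
  using finite_node node_nonempty by (simp add: card_gt_0_iff)

lemma card_node_le: "\<nu> \<in> T \<Longrightarrow> card \<nu> \<le> N"
  using card_mono[OF _ node_subset_modes] by fastforce

lemma child_in_tree: "c \<in> children T \<nu> \<Longrightarrow> c \<in> T"
  unfolding children_def by blast

lemma child_psubset: "c \<in> children T \<nu> \<Longrightarrow> c \<subset> \<nu>"
  unfolding children_def by blast

lemma finite_children: "finite (children T \<nu>)"
  using finite_tree by (rule finite_subset[rotated]) (auto simp: children_def)

lemma card_child_less: "\<nu> \<in> T \<Longrightarrow> c \<in> children T \<nu> \<Longrightarrow> card c < card \<nu>"
  using child_psubset finite_node psubset_card_mono by blast

lemma children_disjoint:
  assumes "\<nu> \<in> T" "c \<in> children T \<nu>" "c' \<in> children T \<nu>" "c \<noteq> c'"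
  shows "c \<inter> c' = {}"
  using laminar[OF child_in_tree child_in_tree, OF assms(2,3)] assms unfolding children_def by blast

lemma exists_child_superset:
  assumes "\<mu> \<in> T" "\<nu> \<in> T" "\<mu> \<subset> \<nu>"
  obtains c where "c \<in> children T \<nu>" "\<mu> \<subseteq> c"
proof -
  define S where "S = {\<kappa>\<in>T. \<mu> \<subseteq> \<kappa> \<and> \<kappa> \<subset> \<nu>}"
  have "finite S" "S \<noteq> {}"
    using finite_tree assms unfolding S_def by auto
  then obtain \<kappa> where \<kappa>: "\<kappa> \<in> S" and max: "\<forall>\<kappa>'\<in>S. \<kappa> \<subseteq> \<kappa>' \<longrightarrow> \<kappa> = \<kappa>'"
    using finite_has_maximal by meson
  have "\<not> (\<exists>\<kappa>'\<in>T. \<kappa> \<subset> \<kappa>' \<and> \<kappa>' \<subset> \<nu>)"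
  proof
    assume "\<exists>\<kappa>'\<in>T. \<kappa> \<subset> \<kappa>' \<and> \<kappa>' \<subset> \<nu>"
    then obtain \<kappa>' where "\<kappa>' \<in> T" "\<kappa> \<subset> \<kappa>'" "\<kappa>' \<subset> \<nu>" by blast
    moreover from this have "\<kappa>' \<in> S" using \<kappa> unfolding S_def by blast
    ultimately show False using max by blast
  qed
  with \<kappa> have "\<kappa> \<in> children T \<nu>" unfolding S_def children_def by blast
  then show thesis using that \<kappa> unfolding S_def by blast
qed

lemma child_superset_unique:
  assumes "\<mu> \<in> T" "\<nu> \<in> T" "c \<in> children T \<nu>" "\<mu> \<subseteq> c" "c' \<in> children T \<nu>" "\<mu> \<subseteq> c'"
  shows "c' = c"
  using children_disjoint[OF assms(2,3,5)] assms(4,6) node_nonempty[OF assms(1)] by blast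

lemma leaf_mode_in_range:
  assumes "\<nu> \<in> T" "children T \<nu> = {}"
  shows "the_elem \<nu> \<in> {1..N}"
proof -
  obtain n where n: "n \<in> \<nu>" using node_nonempty[OF assms(1)] by blast
  have nN: "n \<in> {1..N}" using n node_subset_modes[OF assms(1)] by blast
  have "\<nu> = {n}"
  proof (rule ccontr)
    assume "\<nu> \<noteq> {n}"
    then have "{n} \<subset> \<nu>" using n by blast
    then show False
      using exists_child_superset[OF leaf_in_tree[OF nN] assms(1)] assms(2) by blast
  qed
  then show ?thesis using nN by simp
qed

lemma parent_child:
  assumes "\<nu> \<in> T" "c \<in> children T \<nu>"
  shows "parent T c = \<nu>"
  unfolding parent_def
proof (rule the_equality)
  show "\<nu> \<in> T \<and> c \<in> children T \<nu>" using assms by blast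
  fix \<kappa> assume "\<kappa> \<in> T \<and> c \<in> children T \<kappa>"
  then show "\<kappa> = \<nu>"
    using laminar[OF assms(1), of \<kappa>] assms node_nonempty[OF child_in_tree[OF assms(2)]]
    unfolding children_def by blast
qed

lemma rk_pa_child:
  assumes "\<nu> \<in> T" "c \<in> children T \<nu>"
  shows "rk_pa N T D R c = rk T D R \<nu>"
proof -
  have "c \<noteq> {1..N}" using child_psubset[OF assms(2)] node_subset_modes[OF assms(1)] by blast
  then show ?thesis unfolding rk_pa_def using parent_child[OF assms] by simp
qed

lemma card_children_ge_2:
  assumes "\<nu> \<in> int_nodes T"
  shows "card (children T \<nu>) \<ge> 2"
proof -
  have \<nu>: "\<nu> \<in> T" using assms unfolding int_nodes_def by blast
  obtain c where c: "c \<in> children T \<nu>" using assms unfolding int_nodes_def by blast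
  obtain n where n: "n \<in> \<nu>" "n \<notin> c" using child_psubset[OF c] by blast
  have "{n} \<subset> \<nu>" using n child_psubset[OF c] node_nonempty[OF child_in_tree[OF c]] by blast
  moreover have "n \<in> {1..N}" using n node_subset_modes[OF \<nu>] by blast
  ultimately obtain c' where c': "c' \<in> children T \<nu>" "n \<in> c'"
    using exists_child_superset[OF leaf_in_tree \<nu>] by blast
  have "c \<noteq> c'" using c' n by blast
  then have "card {c, c'} = 2" by simp
  moreover have "{c, c'} \<subseteq> children T \<nu>" using c c' by auto
  ultimately show ?thesis using card_mono[OF finite_children] by metis
qed

lemma child_not_psubset:
  assumes "\<mu> \<in> T" "\<nu> \<in> T" "\<not> \<nu> \<subset> \<mu>" "\<nu> \<noteq> \<mu>" "c \<in> children T \<nu>"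
  shows "\<not> c \<subset> \<mu>"
proof
  assume "c \<subset> \<mu>"
  with laminar[OF assms(1,2)] assms child_psubset[OF assms(5)]
    node_nonempty[OF child_in_tree[OF assms(5)]]
  show False unfolding children_def by blast
qed

section \<open>Intermediate and end tensors\<close>

lemma ten_cong_subtree:
  "\<nu> \<in> T \<Longrightarrow> (\<And>\<kappa>. \<kappa> \<in> T \<Longrightarrow> \<kappa> \<subseteq> \<nu> \<Longrightarrow> V \<kappa> = V' \<kappa> \<and> rep \<kappa> = rep' \<kappa>)
   \<Longrightarrow> ten k T R V rep \<nu> r = ten k T R V' rep' \<nu> r"
proof (induction k arbitrary: \<nu> r)
  case (Suc k)
  have "ten k T R V rep c r' = ten k T R V' rep' c r'" if "c \<in> children T \<nu>" for c r'
    using Suc.IH[OF child_in_tree[OF that]] Suc.prems child_psubset[OF that] by blast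
  then have P: "(\<Prod>c\<in>children T \<nu>. ten k T R V rep c r' idx)
      = (\<Prod>c\<in>children T \<nu>. ten k T R V' rep' c r' idx)" for r' idx
    by (intro prod.cong) auto
  have e: "V \<nu> = V' \<nu>" "rep \<nu> = rep' \<nu>" using Suc.prems by auto
  show ?case
    unfolding ten.simps P e ..
qed simp

lemma ten_update_outside:
  "\<nu> \<in> T \<Longrightarrow> \<not> \<mu> \<subseteq> \<nu> \<Longrightarrow> ten k T R (V(\<mu> := M)) rep \<nu> r = ten k T R V rep \<nu> r"
  by (rule ten_cong_subtree) auto

lemma ten_replace_outside:
  assumes "\<nu> \<in> T" "\<not> \<mu> \<subseteq> \<nu>"
  shows "ten k T R V (replace_at \<mu> X) \<nu> r = ten k T R V (\<lambda>_ _. None) \<nu> r"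
proof (rule ten_cong_subtree[OF assms(1)])
  fix \<kappa> assume "\<kappa> \<subseteq> \<nu>"
  with assms(2) have "\<kappa> \<noteq> \<mu>" by blast
  then show "V \<kappa> = V \<kappa> \<and> replace_at \<mu> X \<kappa> = (\<lambda>_ _. None) \<kappa>"
    by (simp add: replace_at_def)
qed

lemma ten_replace_at_self: "ten k T R V (replace_at \<mu> X) \<mu> r = X r"
  by (cases k) (simp_all add: replace_at_def)

lemma ten_Suc_interior:
  "children T \<nu> \<noteq> {} \<Longrightarrow> ten (Suc k) T R V (\<lambda>_ _. None) \<nu> r idx
   = (\<Sum>r'<R \<nu>. V \<nu> r' r * (\<Prod>c\<in>children T \<nu>. ten k T R V (\<lambda>_ _. None) c r' idx))"
  by simp

lemma ten_update_linear:
  assumes "\<mu> \<in> T" "\<nu> \<in> T" "\<mu> \<subseteq> \<nu>"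
  shows "ten k T R (V(\<mu> := \<lambda>i j. a * M1 i j + b * M2 i j)) (\<lambda>_ _. None) \<nu> r idx
    = a * ten k T R (V(\<mu> := M1)) (\<lambda>_ _. None) \<nu> r idx + b * ten k T R (V(\<mu> := M2)) (\<lambda>_ _. None) \<nu> r idx"
  using assms(2,3)
proof (induction k arbitrary: \<nu> r idx)
  case (Suc k)
  show ?case
  proof (cases "\<nu> = \<mu>")
    case True
    have "ten k T R (V(\<mu> := M)) (\<lambda>_ _. None) c r' = ten k T R V (\<lambda>_ _. None) c r'"
      if "c \<in> children T \<nu>" for c r' M
      using ten_update_outside[OF child_in_tree[OF that]] child_psubset[OF that] True by blast
    then have P: "(\<Prod>c\<in>children T \<nu>. ten k T R (V(\<mu> := M)) (\<lambda>_ _. None) c r' idx)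
        = (\<Prod>c\<in>children T \<nu>. ten k T R V (\<lambda>_ _. None) c r' idx)" for M r' idx
      by (intro prod.cong) auto
    show ?thesis
    proof (cases "children T \<nu> = {}")
      case False
      show ?thesis
        unfolding ten_Suc_interior[OF False] P unfolding True fun_upd_same
        by (simp add: sum_distrib_left sum.distrib distrib_right mult.assoc)
    qed (simp add: True)
  next
    case False
    with Suc.prems obtain c0 where c0: "c0 \<in> children T \<nu>" "\<mu> \<subseteq> c0"
      using exists_child_superset[OF assms(1) Suc.prems(1)] by blast
    have "ten k T R (V(\<mu> := M)) (\<lambda>_ _. None) c r' = ten k T R V (\<lambda>_ _. None) c r'"
      if "c \<in> children T \<nu> - {c0}" for c r' M
    proof (rule ten_update_outside)
      show "c \<in> T" using that child_in_tree by blast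
      show "\<not> \<mu> \<subseteq> c" using that child_superset_unique[OF assms(1) Suc.prems(1) c0, of c] by blast
    qed
    then have "(\<Prod>c\<in>children T \<nu> - {c0}. ten k T R (V(\<mu> := M)) (\<lambda>_ _. None) c r' idx)
        = (\<Prod>c\<in>children T \<nu> - {c0}. ten k T R V (\<lambda>_ _. None) c r' idx)" for M r'
      by (intro prod.cong) auto
    then have split: "(\<Prod>c\<in>children T \<nu>. ten k T R (V(\<mu> := M)) (\<lambda>_ _. None) c r' idx)
       = ten k T R (V(\<mu> := M)) (\<lambda>_ _. None) c0 r' idx *
         (\<Prod>c\<in>children T \<nu> - {c0}. ten k T R V (\<lambda>_ _. None) c r' idx)" for M r'
      using prod.remove[OF finite_children c0(1)] by metis
    have int: "children T \<nu> \<noteq> {}" using c0 by blast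
    show ?thesis
      unfolding ten_Suc_interior[OF int] split Suc.IH[OF child_in_tree[OF c0(1)] c0(2)]
        fun_upd_other[OF False] sum_distrib_left sum.distrib[symmetric]
      by (simp add: algebra_simps)
  qed
qed simp

lemma ten_update_sum:
  assumes "\<mu> \<in> T" "\<nu> \<in> T" "\<mu> \<subseteq> \<nu>" "finite J"
  shows "ten k T R (V(\<mu> := \<lambda>i j. \<Sum>x\<in>J. c x * M x i j)) (\<lambda>_ _. None) \<nu> r idx
       = (\<Sum>x\<in>J. c x * ten k T R (V(\<mu> := M x)) (\<lambda>_ _. None) \<nu> r idx)"
  using assms(4)
proof (induction J rule: finite_induct)
  case empty
  have "ten k T R (V(\<mu> := \<lambda>i j. 0 * (0::real) + 0 * 0)) (\<lambda>_ _. None) \<nu> r idx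
     = 0 * ten k T R (V(\<mu> := \<lambda>i j. 0)) (\<lambda>_ _. None) \<nu> r idx
       + 0 * ten k T R (V(\<mu> := \<lambda>i j. 0)) (\<lambda>_ _. None) \<nu> r idx"
    by (rule ten_update_linear[OF assms(1-3)])
  then show ?case by (simp only: mult_zero_left add_0 sum.empty)
next
  case (insert x J)
  have split: "(\<lambda>i j. \<Sum>y\<in>insert x J. c y * M y i j)
      = (\<lambda>i j. c x * M x i j + 1 * (\<lambda>i j. \<Sum>y\<in>J. c y * M y i j) i j)"
    using insert.hyps by (simp add: fun_eq_iff)
  show ?case
    unfolding split ten_update_linear[OF assms(1-3)] insert.IH
    by (simp only: sum.insert[OF insert.hyps] mult_1_left)
qed

lemma ten_fuel_indep:
  "\<nu> \<in> T \<Longrightarrow> card \<nu> \<le> k1 \<Longrightarrow> card \<nu> \<le> k2 \<Longrightarrow>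
   ten k1 T R V (\<lambda>_ _. None) \<nu> r = ten k2 T R V (\<lambda>_ _. None) \<nu> r"
proof (induction k1 arbitrary: k2 \<nu> r)
  case 0
  then show ?case using card_node_pos[OF "0.prems"(1)] by simp
next
  case (Suc k1)
  then obtain k2' where k2: "k2 = Suc k2'"
    using card_node_pos[OF Suc.prems(1)] by (cases k2) auto
  have "ten k1 T R V (\<lambda>_ _. None) c r' = ten k2' T R V (\<lambda>_ _. None) c r'"
    if "c \<in> children T \<nu>" for c r'
    using Suc.IH[OF child_in_tree[OF that]] card_child_less[OF Suc.prems(1) that] Suc.prems k2
    by simp
  then have P: "(\<Prod>c\<in>children T \<nu>. ten k1 T R V (\<lambda>_ _. None) c r' idx)
      = (\<Prod>c\<in>children T \<nu>. ten k2' T R V (\<lambda>_ _. None) c r' idx)" for r' idx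
    by (intro prod.cong) auto
  show ?case
    unfolding k2 ten.simps option.case P ..
qed

lemma ten_replace_by_own_value:
  assumes "\<mu> \<in> T" "card \<mu> \<le> K"
  shows "\<nu> \<in> T \<Longrightarrow> \<mu> \<subseteq> \<nu> \<Longrightarrow> card \<nu> \<le> k \<Longrightarrow>
    ten k T R V (\<lambda>_ _. None) \<nu> r
    = ten k T R V (replace_at \<mu> (\<lambda>r'. ten K T R V (\<lambda>_ _. None) \<mu> r')) \<nu> r"
proof (induction k arbitrary: \<nu> r)
  case 0
  then show ?case using card_node_pos[OF "0.prems"(1)] by simp
next
  case (Suc k)
  let ?rep = "replace_at \<mu> (\<lambda>r'. ten K T R V (\<lambda>_ _. None) \<mu> r')"
  show ?case
  proof (cases "\<nu> = \<mu>")
    case True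
    show ?thesis
      unfolding True ten_replace_at_self using ten_fuel_indep[OF assms(1)] Suc.prems assms(2) True
      by blast
  next
    case False
    with Suc.prems obtain c0 where c0: "c0 \<in> children T \<nu>" "\<mu> \<subseteq> c0"
      using exists_child_superset[OF assms(1) Suc.prems(1)] by blast
    have "ten k T R V (\<lambda>_ _. None) c r' = ten k T R V ?rep c r'" if c: "c \<in> children T \<nu>" for c r'
    proof (cases "c = c0")
      case True
      then show ?thesis
        using Suc.IH[OF child_in_tree[OF c0(1)] c0(2)] card_child_less[OF Suc.prems(1) c0(1)]
          Suc.prems(3) by simp
    next
      case False
      then have "\<not> \<mu> \<subseteq> c" using child_superset_unique[OF assms(1) Suc.prems(1) c0 c] by blast
      then show ?thesis using ten_replace_outside[OF child_in_tree[OF c]] by simp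
    qed
    then have P: "(\<Prod>c\<in>children T \<nu>. ten k T R V (\<lambda>_ _. None) c r' idx)
        = (\<Prod>c\<in>children T \<nu>. ten k T R V ?rep c r' idx)" for r' idx
      by (intro prod.cong) auto
    have "?rep \<nu> r = None" using False by (simp add: replace_at_def)
    then show ?thesis unfolding ten.simps P by simp
  qed
qed

lemma ten_cong_outside_subtree:
  assumes "\<mu> \<in> T" "\<And>j r. ten j T R V rep \<mu> r = ten j T R V' rep \<mu> r"
    "\<And>\<kappa>. \<kappa> \<in> T \<Longrightarrow> \<not> \<kappa> \<subseteq> \<mu> \<Longrightarrow> V \<kappa> = V' \<kappa>"
  shows "\<nu> \<in> T \<Longrightarrow> \<not> \<nu> \<subset> \<mu> \<Longrightarrow> ten k T R V rep \<nu> r = ten k T R V' rep \<nu> r"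
proof (induction k arbitrary: \<nu> r)
  case (Suc k)
  show ?case
  proof (cases "\<nu> = \<mu>")
    case True
    then show ?thesis using assms(2) by blast
  next
    case False
    have e: "V \<nu> = V' \<nu>" using assms(3) Suc.prems False by blast
    have "ten k T R V rep c r' = ten k T R V' rep c r'" if "c \<in> children T \<nu>" for c r'
      using Suc.IH[OF child_in_tree[OF that] child_not_psubset[OF assms(1) Suc.prems False that]] .
    then have P: "(\<Prod>c\<in>children T \<nu>. ten k T R V rep c r' idx)
        = (\<Prod>c\<in>children T \<nu>. ten k T R V' rep c r' idx)" for r' idx
      by (intro prod.cong) auto
    show ?thesis unfolding ten.simps e P ..
  qed
qed simp

lemma ten_cong_column:
  assumes "\<mu> \<in> T" "\<And>i. V \<mu> i r = V' \<mu> i r" "\<And>\<kappa>. \<kappa> \<in> T \<Longrightarrow> \<kappa> \<subset> \<mu> \<Longrightarrow> V \<kappa> = V' \<kappa>"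
  shows "ten k T R V (\<lambda>_ _. None) \<mu> r = ten k T R V' (\<lambda>_ _. None) \<mu> r"
proof (cases k)
  case (Suc k')
  have "ten k' T R V (\<lambda>_ _. None) c r' = ten k' T R V' (\<lambda>_ _. None) c r'"
    if "c \<in> children T \<mu>" for c r'
    using assms(3) child_psubset[OF that]
    by (intro ten_cong_subtree[OF child_in_tree[OF that]]) auto
  then have P: "(\<Prod>c\<in>children T \<mu>. ten k' T R V (\<lambda>_ _. None) c r' idx)
      = (\<Prod>c\<in>children T \<mu>. ten k' T R V' (\<lambda>_ _. None) c r' idx)" for r' idx
    by (intro prod.cong) auto
  show ?thesis unfolding Suc ten.simps option.case P assms(2) ..
qed simp

lemma ten_zero_column:
  "(\<And>i. V \<mu> i r = 0) \<Longrightarrow> ten k T R V (\<lambda>_ _. None) \<mu> r = (\<lambda>_. 0)"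
  by (cases k) auto

lemma ten_cong_valid_entries:
  "\<nu> \<in> T \<Longrightarrow> r < rk_pa N T D R \<nu> \<Longrightarrow> idx \<in> tensor_index_set N D \<Longrightarrow>
   (\<And>\<kappa> i j. \<kappa> \<in> T \<Longrightarrow> \<kappa> \<subseteq> \<nu> \<Longrightarrow> i < rk T D R \<kappa> \<Longrightarrow> j < rk_pa N T D R \<kappa> \<Longrightarrow> V \<kappa> i j = V' \<kappa> i j) \<Longrightarrow>
   ten k T R V (\<lambda>_ _. None) \<nu> r idx = ten k T R V' (\<lambda>_ _. None) \<nu> r idx"
proof (induction k arbitrary: \<nu> r)
  case (Suc k)
  show ?case
  proof (cases "children T \<nu> = {}")
    case True
    have "idx (the_elem \<nu>) < rk T D R \<nu>"
      using Suc.prems(3) True leaf_mode_in_range[OF Suc.prems(1) True]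
      unfolding tensor_index_set_def rk_def by auto
    with True Suc.prems show ?thesis by simp
  next
    case False
    have rk: "rk T D R \<nu> = R \<nu>" using False by (simp add: rk_def)
    have "V \<nu> r' r = V' \<nu> r' r" if "r' < R \<nu>" for r'
      using Suc.prems(1,2,4) that unfolding rk[symmetric] by blast
    moreover have "ten k T R V (\<lambda>_ _. None) c r' idx = ten k T R V' (\<lambda>_ _. None) c r' idx"
      if c: "c \<in> children T \<nu>" and r': "r' < R \<nu>" for c r'
    proof (rule Suc.IH[OF child_in_tree[OF c] _ Suc.prems(3)])
      show "r' < rk_pa N T D R c" using rk_pa_child[OF Suc.prems(1) c] rk r' by simp
      show "V \<kappa> i j = V' \<kappa> i j"
        if "\<kappa> \<in> T" "\<kappa> \<subseteq> c" "i < rk T D R \<kappa>" "j < rk_pa N T D R \<kappa>" for \<kappa> i j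
        using Suc.prems(4) that child_psubset[OF c] by blast
    qed
    ultimately show ?thesis unfolding ten_Suc_interior[OF False]
      by (intro sum.cong refl arg_cong2[where f="(*)"] prod.cong) auto
  qed
qed simp

lemma ten_Suc_single_row:
  assumes "\<nu> \<in> T" "children T \<nu> \<noteq> {}" "r0 < R \<nu>"
  shows "ten (Suc k) T R (V(\<nu> := single_row r0 w)) (\<lambda>_ _. None) \<nu> r idx
       = w r * (\<Prod>c\<in>children T \<nu>. ten k T R V (\<lambda>_ _. None) c r0 idx)"
proof -
  have "ten k T R (V(\<nu> := single_row r0 w)) (\<lambda>_ _. None) c r' = ten k T R V (\<lambda>_ _. None) c r'"
    if "c \<in> children T \<nu>" for c r'
    using ten_update_outside[OF child_in_tree[OF that]] child_psubset[OF that] by blast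
  then have P: "(\<Prod>c\<in>children T \<nu>. ten k T R (V(\<nu> := single_row r0 w)) (\<lambda>_ _. None) c r' idx)
      = (\<Prod>c\<in>children T \<nu>. ten k T R V (\<lambda>_ _. None) c r' idx)" for r'
    by (intro prod.cong) auto
  show ?thesis
    unfolding ten_Suc_interior[OF assms(2)] P using assms(3)
    by (subst sum.remove[of _ r0]) (auto simp: single_row_def)
qed

lemma ten_Suc_single_col_child:
  assumes "\<nu> \<in> T" "c1 \<in> children T \<nu>" "r0 < R \<nu>"
  shows "ten (Suc k) T R (V(c1 := single_col r0 (\<lambda>i. V c1 i r0))) (\<lambda>_ _. None) \<nu> r idx
       = V \<nu> r0 r * (\<Prod>c\<in>children T \<nu>. ten k T R V (\<lambda>_ _. None) c r0 idx)"
proof -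
  let ?V = "V(c1 := single_col r0 (\<lambda>i. V c1 i r0))"
  have int: "children T \<nu> \<noteq> {}" and c1_ne: "c1 \<noteq> \<nu>" using assms(2) child_psubset by blast+
  have at_r0: "ten k T R ?V (\<lambda>_ _. None) c r0 = ten k T R V (\<lambda>_ _. None) c r0"
    if c: "c \<in> children T \<nu>" for c
  proof (cases "c = c1")
    case True
    then show ?thesis
      by (intro ten_cong_column child_in_tree[OF c]) (auto simp: single_col_def)
  next
    case False
    then have "\<not> c1 \<subseteq> c"
      using children_disjoint[OF assms(1) c assms(2)] node_nonempty[OF child_in_tree[OF assms(2)]]
      by blast
    then show ?thesis using ten_update_outside[OF child_in_tree[OF c]] by blast
  qed
  have "(\<Prod>c\<in>children T \<nu>. ten k T R ?V (\<lambda>_ _. None) c r' idx) = 0" if "r' \<noteq> r0" for r'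
  proof -
    have "ten k T R ?V (\<lambda>_ _. None) c1 r' = (\<lambda>_. 0)"
      by (rule ten_zero_column) (simp add: single_col_def that)
    then show ?thesis using assms(2) by (intro prod_zero[OF finite_children] bexI[of _ c1]) simp_all
  qed
  moreover have "(\<Prod>c\<in>children T \<nu>. ten k T R ?V (\<lambda>_ _. None) c r0 idx)
      = (\<Prod>c\<in>children T \<nu>. ten k T R V (\<lambda>_ _. None) c r0 idx)"
    using at_r0 by (intro prod.cong) auto
  ultimately show ?thesis
    unfolding ten_Suc_interior[OF int] using assms(3) c1_ne
    by (subst sum.remove[of _ r0]) auto
qed

lemma end_tensor_in_space: "end_tensor N D T R V \<in> tensor_space N D"
  unfolding end_tensor_def restrict_tensor_def tensor_space_def by simp

lemma end_tensor_update_linear: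
  assumes "\<mu> \<in> T"
  shows "end_tensor N D T R (V(\<mu> := \<lambda>i j. a * M1 i j + b * M2 i j))
     = (\<lambda>idx. a * end_tensor N D T R (V(\<mu> := M1)) idx + b * end_tensor N D T R (V(\<mu> := M2)) idx)"
  unfolding end_tensor_def restrict_tensor_def
  using ten_update_linear[OF assms root_in_tree node_subset_modes[OF assms]] by (simp add: fun_eq_iff)

lemma end_tensor_update_sum:
  assumes "\<mu> \<in> T" "finite J"
  shows "end_tensor N D T R (V(\<mu> := \<lambda>i j. \<Sum>x\<in>J. c x * M x i j))
     = (\<lambda>idx. \<Sum>x\<in>J. c x * end_tensor N D T R (V(\<mu> := M x)) idx)"
  unfolding end_tensor_def restrict_tensor_def
  using ten_update_sum[OF assms(1) root_in_tree node_subset_modes[OF assms(1)] assms(2)]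
  by (simp add: fun_eq_iff)

lemma end_tensor_cong_valid_entries:
  assumes "\<And>\<kappa> i j. \<kappa> \<in> T \<Longrightarrow> i < rk T D R \<kappa> \<Longrightarrow> j < rk_pa N T D R \<kappa> \<Longrightarrow> V \<kappa> i j = V' \<kappa> i j"
  shows "end_tensor N D T R V = end_tensor N D T R V'"
proof -
  have "ten N T R V (\<lambda>_ _. None) {1..N} 0 idx = ten N T R V' (\<lambda>_ _. None) {1..N} 0 idx"
    if "idx \<in> tensor_index_set N D" for idx
  proof (rule ten_cong_valid_entries[OF root_in_tree _ that])
    show "0 < rk_pa N T D R {1..N}" by (simp add: rk_pa_def)
  qed (rule assms)
  then show ?thesis unfolding end_tensor_def restrict_tensor_def by auto
qed

lemma end_tensor_cong_subtree:
  assumes "\<mu> \<in> T" "\<And>k r. ten k T R V (\<lambda>_ _. None) \<mu> r = ten k T R V' (\<lambda>_ _. None) \<mu> r"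
    "\<And>\<kappa>. \<kappa> \<in> T \<Longrightarrow> \<not> \<kappa> \<subseteq> \<mu> \<Longrightarrow> V \<kappa> = V' \<kappa>"
  shows "end_tensor N D T R V = end_tensor N D T R V'"
  unfolding end_tensor_def
  using ten_cong_outside_subtree[OF assms root_in_tree] node_subset_modes[OF assms(1)] by auto

text \<open>Both sides are the end tensor in which only the term \<open>r\<close> of the sum at \<open>\<nu>\<close> survives.\<close>

lemma end_tensor_child_col_eq_row:
  assumes "\<nu> \<in> T" "c \<in> children T \<nu>" "r < R \<nu>"
  shows "end_tensor N D T R (V(c := single_col r (\<lambda>i. V c i r)))
       = end_tensor N D T R (V(\<nu> := single_row r (V \<nu> r)))"
proof (rule end_tensor_cong_subtree[OF assms(1)])
  have int: "children T \<nu> \<noteq> {}" using assms(2) by blast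
  fix k r'
  show "ten k T R (V(c := single_col r (\<lambda>i. V c i r))) (\<lambda>_ _. None) \<nu> r'
      = ten k T R (V(\<nu> := single_row r (V \<nu> r))) (\<lambda>_ _. None) \<nu> r'"
  proof (cases k)
    case (Suc k')
    show ?thesis
      unfolding Suc
      by (rule ext) (simp only: ten_Suc_single_col_child[where R=R, OF assms]
          ten_Suc_single_row[where R=R, OF assms(1) int assms(3)])
  qed simp
next
  fix \<kappa> assume "\<not> \<kappa> \<subseteq> \<nu>"
  then show "(V(c := single_col r (\<lambda>i. V c i r))) \<kappa> = (V(\<nu> := single_row r (V \<nu> r))) \<kappa>"
    using child_psubset[OF assms(2)] by auto
qed

text \<open>A vanishing local component is covered by \<open>x / 0 = 0\<close>.\<close>

lemma lc_end_tensor_eq: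
  assumes "\<nu> \<in> T" "children T \<nu> \<noteq> {}" "r < R \<nu>"
  shows "lc_end_tensor N D T R V \<nu> r
       = (\<lambda>idx. end_tensor N D T R (V(\<nu> := single_row r (V \<nu> r))) idx / lc_norm N D T R V \<nu> r)"
proof (cases "lc_norm N D T R V \<nu> r = 0")
  case True
  then show ?thesis unfolding lc_end_tensor_def by simp
next
  case False
  define \<sigma> where "\<sigma> = lc_norm N D T R V \<nu> r"
  define Y where "Y = (\<lambda>r' idx. V \<nu> r r' / \<sigma> * (\<Prod>c\<in>children T \<nu>. ten N T R V (\<lambda>_ _. None) c r idx))"
  define V' where "V' = V(\<nu> := single_row r (\<lambda>j. V \<nu> r j / \<sigma>))"
  obtain N' where N': "N = Suc N'"
    using card_node_le[OF assms(1)] card_node_pos[OF assms(1)] by (cases N) auto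
  have "ten N' T R V (\<lambda>_ _. None) c r = ten N T R V (\<lambda>_ _. None) c r" if "c \<in> children T \<nu>" for c
  proof (rule ten_fuel_indep[OF child_in_tree[OF that]])
    show "card c \<le> N'" "card c \<le> N"
      using card_child_less[OF assms(1) that] card_node_le[OF assms(1)] N' by linarith+
  qed
  then have own: "ten N T R V' (\<lambda>_ _. None) \<nu> = Y"
    unfolding N' V'_def Y_def using ten_Suc_single_row[where R=R, OF assms]
    by (intro ext) (simp cong: prod.cong)
  have "ten N T R V' (\<lambda>_ _. None) {1..N} 0
      = ten N T R V' (replace_at \<nu> (ten N T R V' (\<lambda>_ _. None) \<nu>)) {1..N} 0"
    using ten_replace_by_own_value[OF assms(1) card_node_le[OF assms(1)] root_in_tree]
      node_subset_modes[OF assms(1)] card_node_le[OF root_in_tree] by blast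
  also have "\<dots> = ten N T R V (replace_at \<nu> Y) {1..N} 0"
    unfolding own
  proof (rule ten_cong_outside_subtree[OF assms(1) _ _ root_in_tree])
    show "ten j T R V' (replace_at \<nu> Y) \<nu> r' = ten j T R V (replace_at \<nu> Y) \<nu> r'" for j r'
      by (simp only: ten_replace_at_self)
    show "V' \<kappa> = V \<kappa>" if "\<not> \<kappa> \<subseteq> \<nu>" for \<kappa> using that unfolding V'_def by auto
    show "\<not> {1..N} \<subset> \<nu>" using node_subset_modes[OF assms(1)] by blast
  qed
  finally have "end_tensor N D T R V' = lc_end_tensor N D T R V \<nu> r"
    using False unfolding end_tensor_def lc_end_tensor_def replace_at_def Y_def \<sigma>_def by simp
  moreover have "end_tensor N D T R V'
      = end_tensor N D T R (V(\<nu> := \<lambda>i j. (1 / \<sigma>) * single_row r (V \<nu> r) i j + 0 * single_row r (V \<nu> r) i j))"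
    unfolding V'_def
    by (rule arg_cong[where f="\<lambda>M. end_tensor N D T R (V(\<nu> := M))"]) (simp add: single_row_def fun_eq_iff)
  ultimately show ?thesis
    unfolding end_tensor_update_linear[OF assms(1)] \<sigma>_def by simp
qed

section \<open>Gradient flow\<close>

lemma partial_phi_eq_tinner:
  assumes "\<mu> \<in> T" "is_gradient N D L G"
  shows "partial_phi N D T R L V \<mu> i j
       = tinner N D (G (end_tensor N D T R V)) (end_tensor N D T R (V(\<mu> := matrix_unit i j)))"
proof -
  let ?x0 = "V \<mu> i j"
  have line: "wupd V \<mu> i j x = V(\<mu> := \<lambda>a b. 1 * V \<mu> a b + (x - ?x0) * matrix_unit i j a b)" for x
    unfolding wupd_def matrix_unit_def by (auto simp: fun_eq_iff)
  have "phi_H N D T R L (wupd V \<mu> i j x)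
      = L (\<lambda>idx. end_tensor N D T R V idx + (x - ?x0) * end_tensor N D T R (V(\<mu> := matrix_unit i j)) idx)"
    for x unfolding phi_H_def line end_tensor_update_linear[OF assms(1)] by simp
  then show ?thesis
    unfolding partial_phi_def
    using is_gradient_has_real_derivative_along_line[OF assms(2) end_tensor_in_space end_tensor_in_space]
    by (simp add: DERIV_imp_deriv)
qed

lemma gradient_flow_has_real_derivative_entry:
  assumes "gradient_flow N D T R L W" "is_gradient N D L G"
    "\<mu> \<in> T" "i < rk T D R \<mu>" "j < rk_pa N T D R \<mu>" "t \<ge> 0"
  shows "((\<lambda>s. W s \<mu> i j) has_real_derivative
      - tinner N D (G (end_tensor N D T R (W t))) (end_tensor N D T R ((W t)(\<mu> := matrix_unit i j))))
      (at t within {0..})"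
  using assms partial_phi_eq_tinner[OF assms(3,2)] unfolding gradient_flow_def by metis

lemma gradient_flow_has_real_derivative_sum_sq:
  assumes flow: "gradient_flow N D T R L W" and grad: "is_gradient N D L G"
    and "\<mu> \<in> T" "S \<subseteq> {..<rk T D R \<mu>} \<times> {..<rk_pa N T D R \<mu>}" "t \<ge> 0"
    and mask: "\<And>i j. i < rk T D R \<mu> \<Longrightarrow> j < rk_pa N T D R \<mu> \<Longrightarrow>
      M i j = (if (i, j) \<in> S then W t \<mu> i j else 0)"
  shows "((\<lambda>s. \<Sum>(i, j)\<in>S. (W s \<mu> i j)\<^sup>2) has_real_derivative
      2 * tinner N D (\<lambda>idx. - G (end_tensor N D T R (W t)) idx) (end_tensor N D T R ((W t)(\<mu> := M))))
      (at t within {0..})"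
proof -
  let ?G = "G (end_tensor N D T R (W t))"
  let ?E = "\<lambda>(i, j). end_tensor N D T R ((W t)(\<mu> := matrix_unit i j))"
  define M' where "M' a b = (\<Sum>x\<in>S. W t \<mu> (fst x) (snd x) * matrix_unit (fst x) (snd x) a b)" for a b
  have fin: "finite S" using assms(4) finite_subset by blast
  have "((\<lambda>s. \<Sum>(i, j)\<in>S. (W s \<mu> i j)\<^sup>2) has_real_derivative
      (\<Sum>(i, j)\<in>S. 2 * (- tinner N D ?G (?E (i, j))) * W t \<mu> i j)) (at t within {0..})"
    using assms(4)
    by (intro DERIV_sum)
      (auto intro!: DERIV_power[THEN DERIV_cong]
        gradient_flow_has_real_derivative_entry[OF flow grad assms(3) _ _ assms(5)])
  moreover have "(\<Sum>(i, j)\<in>S. 2 * (- tinner N D ?G (?E (i, j))) * W t \<mu> i j)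
      = - 2 * tinner N D ?G (end_tensor N D T R ((W t)(\<mu> := M')))"
    unfolding M'_def end_tensor_update_sum[OF assms(3) fin] tinner_sum_right sum_distrib_left
    by (intro sum.cong) (auto simp: algebra_simps)
  moreover have "end_tensor N D T R ((W t)(\<mu> := M')) = end_tensor N D T R ((W t)(\<mu> := M))"
  proof (rule end_tensor_cong_valid_entries)
    fix \<kappa> a b assume "a < rk T D R \<kappa>" "b < rk_pa N T D R \<kappa>"
    moreover have "M' a b = (\<Sum>x\<in>S. if x = (a, b) then W t \<mu> a b else 0)"
      unfolding M'_def by (intro sum.cong) (auto simp: matrix_unit_def)
    ultimately show "((W t)(\<mu> := M')) \<kappa> a b = ((W t)(\<mu> := M)) \<kappa> a b"
      using fin mask[of a b] by (cases "\<kappa> = \<mu>") auto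
  qed
  ultimately show ?thesis
    by (simp add: tinner_uminus_left)
qed

lemma gradient_flow_has_real_derivative_sq_row_norm:
  assumes "gradient_flow N D T R L W" "is_gradient N D L G" "\<nu> \<in> T" "r < rk T D R \<nu>" "t \<ge> 0"
  shows "((\<lambda>s. (row_norm N D T R (W s) \<nu> r)\<^sup>2) has_real_derivative
      2 * tinner N D (\<lambda>idx. - G (end_tensor N D T R (W t)) idx)
        (end_tensor N D T R ((W t)(\<nu> := single_row r (W t \<nu> r))))) (at t within {0..})"
proof -
  have "(row_norm N D T R V \<nu> r)\<^sup>2 = (\<Sum>(i, j)\<in>{r} \<times> {..<rk_pa N T D R \<nu>}. (V \<nu> i j)\<^sup>2)" for V
    unfolding row_norm_def sum.cartesian_product[symmetric] by (simp add: sum_nonneg)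
  then show ?thesis
    using assms(4)
    by (simp only:) (rule gradient_flow_has_real_derivative_sum_sq[OF assms(1-3) _ assms(5)];
        auto simp: single_row_def)
qed

lemma gradient_flow_has_real_derivative_sq_col_norm:
  assumes "gradient_flow N D T R L W" "is_gradient N D L G" "c \<in> T" "r < rk_pa N T D R c" "t \<ge> 0"
  shows "((\<lambda>s. (col_norm D T R (W s) c r)\<^sup>2) has_real_derivative
      2 * tinner N D (\<lambda>idx. - G (end_tensor N D T R (W t)) idx)
        (end_tensor N D T R ((W t)(c := single_col r (\<lambda>i. W t c i r))))) (at t within {0..})"
proof -
  have "(col_norm D T R V c r)\<^sup>2 = (\<Sum>(i, j)\<in>{..<rk T D R c} \<times> {r}. (V c i j)\<^sup>2)" for V
    unfolding col_norm_def sum.cartesian_product[symmetric] by (simp add: sum_nonneg)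
  then show ?thesis
    using assms(4)
    by (simp only:) (rule gradient_flow_has_real_derivative_sum_sq[OF assms(1-3) _ assms(5)];
        auto simp: single_col_def)
qed

text \<open>By \<open>end_tensor_child_col_eq_row\<close> both squared norms have the same derivative.\<close>

lemma gradient_flow_col_norm_eq_row_norm:
  assumes flow: "gradient_flow N D T R L W" and grad: "is_gradient N D L G"
    and "\<nu> \<in> T" "c \<in> children T \<nu>" "r < R \<nu>"
    and init: "col_norm D T R (W 0) c r = row_norm N D T R (W 0) \<nu> r" and "t \<ge> 0"
  shows "col_norm D T R (W t) c r = row_norm N D T R (W t) \<nu> r"
proof -
  have rk: "rk T D R \<nu> = R \<nu>" using assms(4) by (auto simp: rk_def)
  have r_row: "r < rk T D R \<nu>" and r_col: "r < rk_pa N T D R c"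
    using rk_pa_child[OF assms(3,4)] rk assms(5) by simp_all
  have "((\<lambda>s. (col_norm D T R (W s) c r)\<^sup>2 - (row_norm N D T R (W s) \<nu> r)\<^sup>2)
      has_real_derivative 0) (at s within {0..})" if "s \<in> {0..}" for s :: real
  proof -
    have s: "s \<ge> 0" using that by simp
    have "end_tensor N D T R ((W s)(c := single_col r (\<lambda>i. W s c i r)))
        = end_tensor N D T R ((W s)(\<nu> := single_row r (W s \<nu> r)))"
      using assms(3-5) by (rule end_tensor_child_col_eq_row)
    then show ?thesis
      using DERIV_diff[OF
          gradient_flow_has_real_derivative_sq_col_norm[OF flow grad child_in_tree[OF assms(4)] r_col s]
          gradient_flow_has_real_derivative_sq_row_norm[OF flow grad assms(3) r_row s]]
      by simp
  qed
  then have "\<exists>k. \<forall>s\<in>{0..}. (col_norm D T R (W s) c r)\<^sup>2 - (row_norm N D T R (W s) \<nu> r)\<^sup>2 = k"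
    by (intro has_field_derivative_zero_constant convex_real_interval(1))
  then obtain k where "\<And>s. s \<in> {0..} \<Longrightarrow>
      (col_norm D T R (W s) c r)\<^sup>2 - (row_norm N D T R (W s) \<nu> r)\<^sup>2 = k"
    by blast
  from this[of 0] this[of t] init assms(7)
  have "(col_norm D T R (W t) c r)\<^sup>2 = (row_norm N D T R (W t) \<nu> r)\<^sup>2" by simp
  then show ?thesis
    unfolding col_norm_def row_norm_def by (simp add: sum_nonneg)
qed

lemma col_norm_eq_row_norm_if_unbalancedness_zero:
  assumes "unbalancedness N D T R V = 0" "\<nu> \<in> int_nodes T" "r < R \<nu>" "c \<in> children T \<nu>"
  shows "col_norm D T R V c r = row_norm N D T R V \<nu> r"
proof -
  define U where "U = (\<Union>\<nu>\<in>int_nodes T. \<Union>r<R \<nu>. lc_sqnorms N D T R V \<nu> r)"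
  define S where "S = {\<bar>a - b\<bar> | a b \<nu> r. \<nu> \<in> int_nodes T \<and> r < R \<nu> \<and>
      a \<in> lc_sqnorms N D T R V \<nu> r \<and> b \<in> lc_sqnorms N D T R V \<nu> r}"
  have "finite U"
    unfolding U_def lc_sqnorms_def int_nodes_def using finite_tree finite_children by auto
  moreover have "S \<subseteq> (\<lambda>(a, b). \<bar>a - b\<bar>) ` (U \<times> U)" unfolding S_def U_def by fastforce
  ultimately have "finite S" by (meson finite_SigmaI finite_imageI finite_subset)
  moreover have "\<bar>(col_norm D T R V c r)\<^sup>2 - (row_norm N D T R V \<nu> r)\<^sup>2\<bar> \<in> S"
    unfolding S_def lc_sqnorms_def using assms(2-4) by blast
  ultimately have "\<bar>(col_norm D T R V c r)\<^sup>2 - (row_norm N D T R V \<nu> r)\<^sup>2\<bar> \<le> 0"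
    using assms(1) unfolding unbalancedness_def S_def[symmetric] by (metis Max_ge finite_insert insertCI)
  then show ?thesis
    unfolding col_norm_def row_norm_def by (simp add: sum_nonneg)
qed

lemma gradient_flow_lc_norm_eq_power:
  assumes flow: "gradient_flow N D T R L W" and grad: "is_gradient N D L G"
    and balanced: "unbalancedness N D T R (W 0) = 0"
    and \<nu>: "\<nu> \<in> int_nodes T" and r: "r < R \<nu>" and "t \<ge> 0"
  shows "lc_norm N D T R (W t) \<nu> r = row_norm N D T R (W t) \<nu> r ^ (card (children T \<nu>) + 1)"
proof -
  have "\<nu> \<in> T" using \<nu> unfolding int_nodes_def by blast
  then have "col_norm D T R (W t) c r = row_norm N D T R (W t) \<nu> r" if "c \<in> children T \<nu>" for c
    using gradient_flow_col_norm_eq_row_norm[OF flow grad _ that r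
        col_norm_eq_row_norm_if_unbalancedness_zero[OF balanced \<nu> r that] \<open>t \<ge> 0\<close>] by blast
  then show ?thesis unfolding lc_norm_def by simp
qed

lemma gradient_flow_has_real_derivative_lc_norm:
  assumes flow: "gradient_flow N D T R L W" and grad: "is_gradient N D L G"
    and balanced: "unbalancedness N D T R (W 0) = 0"
    and \<nu>: "\<nu> \<in> int_nodes T" and r: "r < R \<nu>" and t: "t \<ge> 0"
  shows "((\<lambda>s. lc_norm N D T R (W s) \<nu> r) has_real_derivative
      real (card (children T \<nu>) + 1) * row_norm N D T R (W t) \<nu> r ^ (card (children T \<nu>) - 1)
      * tinner N D (\<lambda>idx. - G (end_tensor N D T R (W t)) idx)
          (end_tensor N D T R ((W t)(\<nu> := single_row r (W t \<nu> r))))) (at t within {0..})"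
proof -
  define n where "n = card (children T \<nu>) + 1"
  define \<rho> where "\<rho> s = row_norm N D T R (W s) \<nu> r" for s
  define h where "h = tinner N D (\<lambda>idx. - G (end_tensor N D T R (W t)) idx)
      (end_tensor N D T R ((W t)(\<nu> := single_row r (W t \<nu> r))))"
  have "\<nu> \<in> T" "r < rk T D R \<nu>" using \<nu> r unfolding int_nodes_def by (auto simp: rk_def)
  then have "((\<lambda>s. (\<rho> s)\<^sup>2) has_real_derivative 2 * h) (at t within {0..})"
    unfolding \<rho>_def h_def by (rule gradient_flow_has_real_derivative_sq_row_norm[OF flow grad _ _ t])
  moreover have "\<rho> s \<ge> 0" for s unfolding \<rho>_def row_norm_def by (simp add: sum_nonneg)
  moreover have "n \<ge> 2" using card_children_ge_2[OF \<nu>] unfolding n_def by simp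
  ultimately have "((\<lambda>s. \<rho> s ^ n) has_real_derivative real n / 2 * \<rho> t ^ (n - 2) * (2 * h))
      (at t within {0..})"
    by (intro has_real_derivative_power_via_square) auto
  then show ?thesis
    unfolding n_def[symmetric] h_def[symmetric] \<rho>_def[symmetric]
    by (rule has_field_derivative_transform_within[OF DERIV_cong zero_less_one])
      (use gradient_flow_lc_norm_eq_power[OF flow grad balanced \<nu> r] t in
        \<open>simp_all add: n_def \<rho>_def\<close>)
qed

end

theorem theorem1:
  fixes N :: nat and D :: "nat \<Rightarrow> nat" and T :: "nat set set"
    and R :: "nat set \<Rightarrow> nat" and W :: "real \<Rightarrow> weights"
    and L :: "tensor \<Rightarrow> real" and G :: "tensor \<Rightarrow> tensor"
  assumes tree: "mode_tree N T"
    and D_pos: "\<forall>n\<in>{1..N}. D n > 0"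
    and R_pos: "\<forall>\<nu>\<in>int_nodes T. R \<nu> > 0"
    and L_nonneg: "\<forall>X\<in>tensor_space N D. L X \<ge> 0"
    and L_grad: "is_gradient N D L G"
    and L_smooth: "locally_smooth N D G"
    and flow: "gradient_flow N D T R L W"
    and balanced: "unbalancedness N D T R (W 0) = 0"
  shows "\<forall>\<nu>\<in>int_nodes T. \<forall>r<R \<nu>. \<forall>t\<ge>0.
     ((\<lambda>s. lc_norm N D T R (W s) \<nu> r) has_real_derivative
        (lc_norm N D T R (W t) \<nu> r powr (2 - 2 / real (card (children T \<nu>) + 1))
         * real (card (children T \<nu>) + 1)
         * tinner N D (\<lambda>idx. - G (end_tensor N D T R (W t)) idx)
                      (lc_end_tensor N D T R (W t) \<nu> r))) (at t within {0..})"
proof (intro ballI allI impI)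
  interpret mode_tree_family N T by (rule mode_tree_family.intro[OF tree])
  fix \<nu> r and t :: real
  assume \<nu>: "\<nu> \<in> int_nodes T" and r: "r < R \<nu>" and t: "t \<ge> 0"
  define n where "n = card (children T \<nu>) + 1"
  define \<rho> where "\<rho> = row_norm N D T R (W t) \<nu> r"
  define E where "E = end_tensor N D T R ((W t)(\<nu> := single_row r (W t \<nu> r)))"
  have "\<nu> \<in> T" "children T \<nu> \<noteq> {}" using \<nu> unfolding int_nodes_def by auto
  moreover have "lc_norm N D T R (W t) \<nu> r = \<rho> ^ n"
    using gradient_flow_lc_norm_eq_power[OF flow L_grad balanced \<nu> r t] unfolding \<rho>_def n_def .
  moreover have "\<rho> \<ge> 0" unfolding \<rho>_def row_norm_def by (simp add: sum_nonneg)
  moreover have "n \<ge> 3" using card_children_ge_2[OF \<nu>] unfolding n_def by simp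
  ultimately have "real n * \<rho> ^ (n - 2) * tinner N D (\<lambda>idx. - G (end_tensor N D T R (W t)) idx) E
      = lc_norm N D T R (W t) \<nu> r powr (2 - 2 / real n) * real n
        * tinner N D (\<lambda>idx. - G (end_tensor N D T R (W t)) idx) (lc_end_tensor N D T R (W t) \<nu> r)"
    using power_rate_eq_powr lc_end_tensor_eq[where R=R, OF _ _ r]
    unfolding E_def by (simp add: tinner_divide_right)
  moreover have "((\<lambda>s. lc_norm N D T R (W s) \<nu> r) has_real_derivative
      real n * \<rho> ^ (n - 2) * tinner N D (\<lambda>idx. - G (end_tensor N D T R (W t)) idx) E) (at t within {0..})"
    using gradient_flow_has_real_derivative_lc_norm[OF flow L_grad balanced \<nu> r t]
    unfolding n_def \<rho>_def E_def by simp
  ultimately show "((\<lambda>s. lc_norm N D T R (W s) \<nu> r) has_real_derivative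
        (lc_norm N D T R (W t) \<nu> r powr (2 - 2 / real (card (children T \<nu>) + 1))
         * real (card (children T \<nu>) + 1)
         * tinner N D (\<lambda>idx. - G (end_tensor N D T R (W t)) idx)
                      (lc_end_tensor N D T R (W t) \<nu> r))) (at t within {0..})"
    unfolding n_def[symmetric] by (metis DERIV_cong)
qed

end
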